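(* Consider the ride-hailing model in the context and a demand vector $\bm b^C$ with $0\le b^C_i\le b_i$ for all $i$. If $(\bm w^C,\bm x^C)$ is a CV equilibrium for $\bm b^C$, then $\bm x^C$ is an optimal solution of the convex program $\mathcal{CV}(\bm b^C)$ and $\bm w^C$ is a vector of Lagrange multipliers of its capacity constraints $\sum_{j}x_{ji}\le b^C_i$.
   Context: Model. There are $L$ regions $\{1,\dots,L\}$. For regions $i,j$, $b_{ij}\ge0$ is the rate of customers from $i$ to $j$; $b_i=\sum_j b_{ij}$ (assumed $>0$), $q_{ij}=b_{ij}/b_i$. Travel times satisfy $t_{ij}>0$ for $i\neq j$, $t_{ii}=0$. Constants: $p>0$, $c\ge0$, $R\in(0,1)$, CV fleet mass $N>0$. For $i,\alpha$: $\tau^{dr}_{i\alpha}=t_{i\alpha}+\sum_j q_{\alpha j}t_{\alpha j}$ and $r^C_{i\alpha}=p(1-R)\sum_j q_{\alpha j}t_{\alpha j}-c\tau^{dr}_{i\alpha}$. A matrix $\bm x=(x_{i\alpha})\in\mathbb R^{L\times L}_{\ge0}$ satisfies flow balance if $\sum_j(\sum_k x_{kj})q_{ji}=\sum_\alpha x_{i\alpha}$ for all $i$. CV equilibrium for $\bm b^C$: a pair $(\bm w^C,\bm x^C)$, $\bm w^C\in\mathbb R^L_{\ge0}$, $\bm x^C\in\mathbb R^{L\times L}_{\ge0}$, such that (i) $\bm x^C$ maximizes $\sum_{i,\alpha}r^C_{i\alpha}x_{i\alpha}$ over all $\bm x\ge0$ satisfying flow balance and $\sum_{i,\alpha}(\tau^{dr}_{i\alpha}+w^C_\alpha)x_{i\alpha}=N$;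 (ii) $\sum_j x^C_{ji}\le b^C_i$ for all $i$; (iii) $w^C_i(b^C_i-\sum_j x^C_{ji})=0$ for all $i$. $\mathcal{CV}(\bm b^C)$: maximize $N\log\sum_{i,\alpha}r^C_{i\alpha}x_{i\alpha}-\sum_{i,\alpha}\tau^{dr}_{i\alpha}x_{i\alpha}$ over $\bm x\ge0$ satisfying flow balance and $\sum_j x_{ji}\le b^C_i$ for all $i$. *)

theory Defs
  imports Complex_Main "HOL-Library.Extended_Real"
begin

definition bsum :: "('r::finite \<Rightarrow> 'r \<Rightarrow> real) \<Rightarrow> 'r \<Rightarrow> real" where
  "bsum b i = (\<Sum>j\<in>UNIV. b i j)"

definition qmat :: "('r::finite \<Rightarrow> 'r \<Rightarrow> real) \<Rightarrow> 'r \<Rightarrow> 'r \<Rightarrow> real" where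
  "qmat b i j = b i j / bsum b i"

definition tau_dr :: "('r::finite \<Rightarrow> 'r \<Rightarrow> real) \<Rightarrow> ('r \<Rightarrow> 'r \<Rightarrow> real) \<Rightarrow> 'r \<Rightarrow> 'r \<Rightarrow> real" where
  "tau_dr b t i a = t i a + (\<Sum>j\<in>UNIV. qmat b a j * t a j)"

definition rC :: "real \<Rightarrow> real \<Rightarrow> real \<Rightarrow> ('r::finite \<Rightarrow> 'r \<Rightarrow> real) \<Rightarrow> ('r \<Rightarrow> 'r \<Rightarrow> real)
                  \<Rightarrow> 'r \<Rightarrow> 'r \<Rightarrow> real" where
  "rC p R c b t i a = p * (1 - R) * (\<Sum>j\<in>UNIV. qmat b a j * t a j) - c * tau_dr b t i a"

definition nonneg_mat :: "('r \<Rightarrow> 'r \<Rightarrow> real) \<Rightarrow> bool" where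
  "nonneg_mat x \<longleftrightarrow> (\<forall>i a. 0 \<le> x i a)"

definition flow_balance :: "('r::finite \<Rightarrow> 'r \<Rightarrow> real) \<Rightarrow> ('r \<Rightarrow> 'r \<Rightarrow> real) \<Rightarrow> bool" where
  "flow_balance b x \<longleftrightarrow>
     (\<forall>i. (\<Sum>j\<in>UNIV. (\<Sum>k\<in>UNIV. x k j) * qmat b j i) = (\<Sum>a\<in>UNIV. x i a))"

definition inflow :: "('r::finite \<Rightarrow> 'r \<Rightarrow> real) \<Rightarrow> 'r \<Rightarrow> real" where
  "inflow x i = (\<Sum>j\<in>UNIV. x j i)"

definition CV_equilibrium ::
  "real \<Rightarrow> real \<Rightarrow> real \<Rightarrow> real \<Rightarrow> ('r::finite \<Rightarrow> 'r \<Rightarrow> real) \<Rightarrow> ('r \<Rightarrow> 'r \<Rightarrow> real)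
   \<Rightarrow> ('r \<Rightarrow> real) \<Rightarrow> ('r \<Rightarrow> real) \<Rightarrow> ('r \<Rightarrow> 'r \<Rightarrow> real) \<Rightarrow> bool" where
  "CV_equilibrium p R c N b t bC w x \<longleftrightarrow>
     (\<forall>i. 0 \<le> w i) \<and>
     \<comment> \<open>(i)\<close>
     (nonneg_mat x \<and> flow_balance b x \<and>
      (\<Sum>i\<in>UNIV. \<Sum>a\<in>UNIV. (tau_dr b t i a + w a) * x i a) = N \<and>
      (\<forall>y. nonneg_mat y \<and> flow_balance b y \<and>
           (\<Sum>i\<in>UNIV. \<Sum>a\<in>UNIV. (tau_dr b t i a + w a) * y i a) = N \<longrightarrow>
           (\<Sum>i\<in>UNIV. \<Sum>a\<in>UNIV. rC p R c b t i a * y i a)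
             \<le> (\<Sum>i\<in>UNIV. \<Sum>a\<in>UNIV. rC p R c b t i a * x i a))) \<and>
     \<comment> \<open>(ii)\<close>
     (\<forall>i. inflow x i \<le> bC i) \<and>
     \<comment> \<open>(iii)\<close>
     (\<forall>i. w i * (bC i - inflow x i) = 0)"

text \<open>Objective of CV(bC), with the standard convention log s = -\<infinity> for s \<le> 0
  (the domain of the concave objective is r\<cdot>x > 0).\<close>
definition CV_obj :: "real \<Rightarrow> real \<Rightarrow> real \<Rightarrow> real \<Rightarrow> ('r::finite \<Rightarrow> 'r \<Rightarrow> real)
   \<Rightarrow> ('r \<Rightarrow> 'r \<Rightarrow> real) \<Rightarrow> ('r \<Rightarrow> 'r \<Rightarrow> real) \<Rightarrow> ereal" where
  "CV_obj p R c N b t x =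
     (let s = (\<Sum>i\<in>UNIV. \<Sum>a\<in>UNIV. rC p R c b t i a * x i a) in
      if s > 0 then ereal (N * ln s - (\<Sum>i\<in>UNIV. \<Sum>a\<in>UNIV. tau_dr b t i a * x i a))
      else -\<infinity>)"

definition CV_feasible :: "('r::finite \<Rightarrow> 'r \<Rightarrow> real) \<Rightarrow> ('r \<Rightarrow> real) \<Rightarrow> ('r \<Rightarrow> 'r \<Rightarrow> real) \<Rightarrow> bool" where
  "CV_feasible b bC x \<longleftrightarrow> nonneg_mat x \<and> flow_balance b x \<and> (\<forall>i. inflow x i \<le> bC i)"

definition CV_optimal :: "real \<Rightarrow> real \<Rightarrow> real \<Rightarrow> real \<Rightarrow> ('r::finite \<Rightarrow> 'r \<Rightarrow> real)
   \<Rightarrow> ('r \<Rightarrow> 'r \<Rightarrow> real) \<Rightarrow> ('r \<Rightarrow> real) \<Rightarrow> ('r \<Rightarrow> 'r \<Rightarrow> real) \<Rightarrow> bool" where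
  "CV_optimal p R c N b t bC x \<longleftrightarrow>
     CV_feasible b bC x \<and>
     (\<forall>y. CV_feasible b bC y \<longrightarrow> CV_obj p R c N b t y \<le> CV_obj p R c N b t x)"

definition CV_lagrange_multipliers :: "real \<Rightarrow> real \<Rightarrow> real \<Rightarrow> real \<Rightarrow> ('r::finite \<Rightarrow> 'r \<Rightarrow> real)
   \<Rightarrow> ('r \<Rightarrow> 'r \<Rightarrow> real) \<Rightarrow> ('r \<Rightarrow> real) \<Rightarrow> ('r \<Rightarrow> 'r \<Rightarrow> real) \<Rightarrow> ('r \<Rightarrow> real) \<Rightarrow> bool" where
  "CV_lagrange_multipliers p R c N b t bC x w \<longleftrightarrow>
     (\<forall>i. 0 \<le> w i) \<and>
     (\<forall>i. w i * (bC i - inflow x i) = 0) \<and>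
     (\<forall>y. nonneg_mat y \<and> flow_balance b y \<longrightarrow>
        CV_obj p R c N b t y - ereal (\<Sum>i\<in>UNIV. w i * (inflow y i - bC i))
          \<le> CV_obj p R c N b t x - ereal (\<Sum>i\<in>UNIV. w i * (inflow x i - bC i)))"

end

theory Submission
  imports Defs
begin

text \<open>Write \<open>D y = \<Sum>\<^sub>i\<^sub>\<alpha> (\<tau>\<^sub>i\<^sub>\<alpha> + w\<^sub>\<alpha>) y\<^sub>i\<^sub>\<alpha>\<close> for the fleet-mass functional of condition (i).
  Both \<open>r\<cdot>y\<close> and \<open>D y\<close> are linear and the nonnegative flow-balanced matrices form a
  cone, so maximality of \<open>x\<close> on the slice \<open>D = N\<close> scales to \<open>r\<cdot>y \<le> (r\<cdot>x) D y / N\<close> on the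
  whole cone.  With \<open>ln u \<le> u - 1\<close> this yields \<open>N log (r\<cdot>y) - D y \<le> N log (r\<cdot>x) - N\<close>.
  Since \<open>D y = \<tau>\<cdot>y + \<Sum>\<^sub>i w\<^sub>i inflow\<^sub>i y\<close>, this says that \<open>x\<close> maximizes the partial Lagrangian
  with multipliers \<open>w\<close>; complementary slackness (iii) and feasibility (ii) then make \<open>x\<close>
  optimal.\<close>

definition mat_inner :: "('r::finite \<Rightarrow> 'r \<Rightarrow> real) \<Rightarrow> ('r \<Rightarrow> 'r \<Rightarrow> real) \<Rightarrow> real" where
  "mat_inner f y = (\<Sum>i\<in>UNIV. \<Sum>a\<in>UNIV. f i a * y i a)"

lemma mat_inner_scale_right:
  "mat_inner f (\<lambda>i a. k * y i a) = k * mat_inner f y"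
  unfolding mat_inner_def by (simp add: sum_distrib_left mult_ac)

lemma mat_inner_scale_left:
  "mat_inner (\<lambda>i a. k * f i a) y = k * mat_inner f y"
  unfolding mat_inner_def by (simp add: sum_distrib_left mult_ac)

lemma mat_inner_mono:
  assumes "\<And>i a. f i a \<le> g i a" and "nonneg_mat y"
  shows "mat_inner f y \<le> mat_inner g y"
  using assms unfolding mat_inner_def nonneg_mat_def by (intro sum_mono mult_right_mono) auto

lemma mat_inner_add_column_weight:
  "mat_inner (\<lambda>i a. f i a + w a) y = mat_inner f y + (\<Sum>a\<in>UNIV. w a * inflow y a)"
proof -
  have "mat_inner (\<lambda>i a. f i a + w a) y = mat_inner f y + (\<Sum>i\<in>UNIV. \<Sum>a\<in>UNIV. w a * y i a)"
    unfolding mat_inner_def by (simp add: distrib_right sum.distrib)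
  also have "(\<Sum>i\<in>UNIV. \<Sum>a\<in>UNIV. w a * y i a) = (\<Sum>a\<in>UNIV. w a * inflow y a)"
    unfolding inflow_def by (subst sum.swap) (simp add: sum_distrib_left)
  finally show ?thesis .
qed

lemma nonneg_mat_scale: "nonneg_mat y \<Longrightarrow> 0 \<le> k \<Longrightarrow> nonneg_mat (\<lambda>i a. k * y i a)"
  unfolding nonneg_mat_def by simp

lemma flow_balance_scale: "flow_balance b y \<Longrightarrow> flow_balance b (\<lambda>i a. k * y i a)"
  unfolding flow_balance_def by (simp add: sum_distrib_left[symmetric] mult.assoc)

lemma mat_inner_le_of_max_on_slice:
  assumes cone: "\<And>y k. y \<in> K \<Longrightarrow> 0 < k \<Longrightarrow> (\<lambda>i a. k * y i a) \<in> K"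
    and max: "\<And>y. y \<in> K \<Longrightarrow> mat_inner d y = N \<Longrightarrow> mat_inner r y \<le> mat_inner r x"
    and "0 < N" and "y \<in> K" and "0 < mat_inner d y"
  shows "mat_inner r y * N \<le> mat_inner r x * mat_inner d y"
proof -
  define k where "k = N / mat_inner d y"
  have "0 < k" using assms(3,5) by (simp add: k_def)
  have "mat_inner d (\<lambda>i a. k * y i a) = k * mat_inner d y"
    by (rule mat_inner_scale_right)
  also have "\<dots> = N"
    using assms(5) by (simp add: k_def)
  finally have "mat_inner d (\<lambda>i a. k * y i a) = N" .
  with max cone[OF \<open>y \<in> K\<close> \<open>0 < k\<close>] have "k * mat_inner r y \<le> mat_inner r x"
    by (metis mat_inner_scale_right)
  then show ?thesis using assms(5) by (simp add: k_def field_simps)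
qed

lemma N_ln_minus_le:
  fixes s s0 d N :: real
  assumes "0 < s" and "0 < d" and "0 < N" and "s * N \<le> s0 * d"
  shows "0 < s0" and "N * ln s - d \<le> N * ln s0 - N"
proof -
  from assms show "0 < s0" by (metis mult_pos_pos order_less_le_trans zero_less_mult_pos2)
  have "s \<le> s0 * (d / N)"
    using assms by (simp add: field_simps)
  then have "ln s \<le> ln (s0 * (d / N))"
    using assms \<open>0 < s0\<close> by simp
  also have "\<dots> = ln s0 + ln (d / N)"
    using \<open>0 < s0\<close> assms by (intro ln_mult_pos) auto
  also have "\<dots> \<le> ln s0 + (d / N - 1)"
    using ln_le_minus_one[of "d / N"] assms by simp
  finally have "N * ln s \<le> N * (ln s0 + (d / N - 1))"
    using assms by (intro mult_left_mono) auto
  also have "\<dots> = N * ln s0 + d - N"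
    using assms by (simp add: field_simps)
  finally show "N * ln s - d \<le> N * ln s0 - N" by simp
qed

lemma ereal_le_of_penalized_le:
  fixes u v :: ereal and l m :: real
  assumes "u - ereal l \<le> v - ereal m" and "m = 0" and "l \<le> 0"
  shows "u \<le> v"
  using assms by (cases u; cases v) auto

lemma sum_weighted_slack_eq_0:
  assumes "\<And>i. w i * (u i - v i) = (0::real)"
  shows "(\<Sum>i\<in>A. w i * (v i - u i)) = 0"
proof (rule sum.neutral, intro ballI)
  fix i
  have "w i * (v i - u i) = - (w i * (u i - v i))" by (simp add: algebra_simps)
  then show "w i * (v i - u i) = 0" using assms by simp
qed

lemma qmat_nonneg: "(\<And>i j. 0 \<le> b i j) \<Longrightarrow> 0 \<le> qmat b i j"
  unfolding qmat_def bsum_def by (simp add: sum_nonneg)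

lemma tau_dr_nonneg:
  assumes "\<And>i j. 0 \<le> b i j" and "\<And>i j. 0 \<le> t i j"
  shows "0 \<le> tau_dr b t i a"
  unfolding tau_dr_def
  by (intro add_nonneg_nonneg sum_nonneg mult_nonneg_nonneg assms qmat_nonneg)

lemma rC_le_tau_dr:
  assumes "\<And>i j. 0 \<le> b i j" and "\<And>i j. 0 \<le> t i j" and "0 \<le> c" and "0 \<le> p * (1 - R)"
  shows "rC p R c b t i a \<le> p * (1 - R) * tau_dr b t i a"
proof -
  have "0 \<le> c * tau_dr b t i a"
    using assms(3) tau_dr_nonneg[of b t, OF assms(1,2)] by simp
  moreover have "0 \<le> p * (1 - R) * t i a" using assms by simp
  ultimately show ?thesis unfolding rC_def tau_dr_def by (simp add: distrib_left)
qed

lemma CV_obj_eq: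
  "CV_obj p R c N b t y =
     (if 0 < mat_inner (rC p R c b t) y
      then ereal (N * ln (mat_inner (rC p R c b t) y) - mat_inner (tau_dr b t) y) else -\<infinity>)"
  unfolding CV_obj_def mat_inner_def Let_def by simp

lemma CV_equilibrium_maximizes_lagrangian:
  assumes b_nonneg: "\<And>i j. 0 \<le> b i j" and t_nonneg: "\<And>i j. 0 \<le> t i j"
    and "0 \<le> c" and "0 \<le> p * (1 - R)" and "0 < N"
    and equil: "CV_equilibrium p R c N b t bC w x"
    and "nonneg_mat y" and "flow_balance b y"
  shows "CV_obj p R c N b t y - ereal (\<Sum>i\<in>UNIV. w i * (inflow y i - bC i))
           \<le> CV_obj p R c N b t x - ereal (\<Sum>i\<in>UNIV. w i * (inflow x i - bC i))"
proof -
  let ?r = "rC p R c b t" and ?\<tau> = "tau_dr b t"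
  let ?d = "\<lambda>i a. ?\<tau> i a + w a" and ?K = "{y. nonneg_mat y \<and> flow_balance b y}"
  have w_nonneg: "\<And>i. 0 \<le> w i" and D_x: "mat_inner ?d x = N"
    and max: "\<And>y. y \<in> ?K \<Longrightarrow> mat_inner ?d y = N \<Longrightarrow> mat_inner ?r y \<le> mat_inner ?r x"
    using equil unfolding CV_equilibrium_def mat_inner_def by auto
  have lagrangian_eq: "mat_inner ?\<tau> z + (\<Sum>i\<in>UNIV. w i * (inflow z i - bC i))
      = mat_inner ?d z - (\<Sum>i\<in>UNIV. w i * bC i)" for z
    by (simp add: mat_inner_add_column_weight right_diff_distrib sum_subtractf)
  show ?thesis
  proof (cases "0 < mat_inner ?r y")
    case True
    have "mat_inner ?r y \<le> mat_inner (\<lambda>i a. p * (1 - R) * ?d i a) y"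
    proof (rule mat_inner_mono[OF _ \<open>nonneg_mat y\<close>])
      fix i a
      have "p * (1 - R) * ?\<tau> i a \<le> p * (1 - R) * ?d i a"
        using w_nonneg assms(4) by (intro mult_left_mono) auto
      then show "?r i a \<le> p * (1 - R) * ?d i a"
        using rC_le_tau_dr[OF b_nonneg t_nonneg assms(3,4)] by (rule order_trans[rotated])
    qed
    then have "mat_inner ?r y \<le> p * (1 - R) * mat_inner ?d y"
      by (simp add: mat_inner_scale_left)
    with True assms(4) have "0 < mat_inner ?d y"
      by (meson mult_nonneg_nonpos not_less order_less_le_trans)
    then have "mat_inner ?r y * N \<le> mat_inner ?r x * mat_inner ?d y"
      using assms(5,7,8) max
      by (intro mat_inner_le_of_max_on_slice[where K = ?K])
        (auto intro: nonneg_mat_scale flow_balance_scale)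
    from N_ln_minus_le[OF True \<open>0 < mat_inner ?d y\<close> \<open>0 < N\<close> this]
    show ?thesis
      using lagrangian_eq[of x] lagrangian_eq[of y] D_x by (simp add: CV_obj_eq)
  qed (simp add: CV_obj_eq)
qed

theorem proposition1:
  fixes b t :: "'r::finite \<Rightarrow> 'r \<Rightarrow> real"
    and p c R N :: real
    and bC wC :: "'r \<Rightarrow> real"
    and xC :: "'r \<Rightarrow> 'r \<Rightarrow> real"
  assumes b_nonneg: "\<forall>i j. 0 \<le> b i j"
    and b_pos: "\<forall>i. 0 < bsum b i"
    and t_pos: "\<forall>i j. i \<noteq> j \<longrightarrow> 0 < t i j"
    and t_diag: "\<forall>i. t i i = 0"
    and p_pos: "0 < p" and c_nonneg: "0 \<le> c"
    and R_pos: "0 < R" and R_lt1: "R < 1"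
    and N_pos: "0 < N"
    and bC_bounds: "\<forall>i. 0 \<le> bC i \<and> bC i \<le> bsum b i"
    and equil: "CV_equilibrium p R c N b t bC wC xC"
  shows "CV_optimal p R c N b t bC xC \<and> CV_lagrange_multipliers p R c N b t bC xC wC"
proof -
  define penalty where "penalty y = (\<Sum>i\<in>UNIV. wC i * (inflow y i - bC i))" for y
  have b_nonneg': "\<And>i j. 0 \<le> b i j" and t_nonneg: "\<And>i j. 0 \<le> t i j"
    using b_nonneg t_pos t_diag by (metis order.strict_implies_order order_refl)+
  have "0 \<le> p * (1 - R)" using p_pos R_lt1 by simp
  note lagrangian = CV_equilibrium_maximizes_lagrangian[OF b_nonneg' t_nonneg c_nonneg this N_pos
      equil, folded penalty_def]
  have w_nonneg: "\<And>i. 0 \<le> wC i" and slack: "\<And>i. wC i * (bC i - inflow xC i) = 0"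
    and feasible: "CV_feasible b bC xC"
    using equil unfolding CV_equilibrium_def CV_feasible_def by auto
  have "penalty xC = 0"
    unfolding penalty_def using slack by (rule sum_weighted_slack_eq_0)
  have optimal: "CV_obj p R c N b t y \<le> CV_obj p R c N b t xC" if "CV_feasible b bC y" for y
  proof (rule ereal_le_of_penalized_le)
    show "CV_obj p R c N b t y - ereal (penalty y) \<le> CV_obj p R c N b t xC - ereal (penalty xC)"
      using that unfolding CV_feasible_def by (intro lagrangian) auto
    show "penalty y \<le> 0"
      using that w_nonneg unfolding CV_feasible_def penalty_def
      by (intro sum_nonpos mult_nonneg_nonpos) auto
  qed fact
  show ?thesis
    unfolding CV_optimal_def CV_lagrange_multipliers_def penalty_def[symmetric]
    using feasible optimal w_nonneg slack lagrangian by blast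
qed

end
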